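(* Let $d\ge1$, $\sigma_1>0$, $\beta>3$, and $p_+\in(0,1)$ with $p_-:=1-p_+\ge\frac12$. Let $(X,Y)$ be distributed as follows: $\mathbb P(Y=+1)=p_+$, $\mathbb P(Y=-1)=p_-$, $X\mid Y=+1\sim\mathcal N(0,\sigma_1^2\mathbf I_d)$ and $X\mid Y=-1\sim\mathcal N(0,\beta\sigma_1^2\mathbf I_d)$. Let $\Phi$ be the CDF of $\mathcal N(0,1)$. For any $\theta\in\mathbb R^d\setminus\{0\}$ and $b>0$, the linear classifier $f(x)=\mathrm{sign}(\langle\theta,x\rangle+b)$ has error probability $$\mathrm{err}_f:=\mathbb P\big(f(X)\neq Y\big)=p_+\Phi\Big(-\frac{b}{\|\theta\|_2\sigma_1}\Big)+p_-\Phi\Big(\frac{b}{\|\theta\|_2\sqrt\beta\,\sigma_1}\Big)\ge\frac14.$$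
   Context: $\mathbf I_d$ is the $d\times d$ identity matrix. The event $\langle\theta,X\rangle+b=0$ has probability zero, so the convention for $\mathrm{sign}(0)$ is immaterial. *)

theory Defs
  imports "HOL-Probability.Probability"
begin

definition Phi :: "real \<Rightarrow> real" where
  "Phi t = measure (density lborel std_normal_density) {..t}"

text \<open>Density of the isotropic Gaussian N(0, s^2 I_d) on a Euclidean space of dimension d = DIM('a)
  (s is the standard deviation per coordinate), w.r.t. Lebesgue measure.\<close>
definition iso_gauss_density :: "real \<Rightarrow> 'a::euclidean_space \<Rightarrow> real" where
  "iso_gauss_density s x = (\<Prod>i\<in>Basis. normal_density 0 s (x \<bullet> i))"

definition joint_law :: "real \<Rightarrow> real \<Rightarrow> real \<Rightarrow> ('a::euclidean_space \<times> int) measure" where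
  "joint_law pp s1 beta = density (lborel \<Otimes>\<^sub>M count_space UNIV)
     (\<lambda>(x, y). ennreal (if y = 1 then pp * iso_gauss_density s1 x
                         else if y = -1 then (1 - pp) * iso_gauss_density (sqrt beta * s1) x
                         else 0))"

text \<open>sign with the (immaterial) convention sign 0 = 1.\<close>
definition sgn_lab :: "real \<Rightarrow> int" where
  "sgn_lab t = (if t \<ge> 0 then 1 else -1)"

definition lin_clf :: "'a::euclidean_space \<Rightarrow> real \<Rightarrow> 'a \<Rightarrow> int" where
  "lin_clf \<theta> b x = sgn_lab (\<theta> \<bullet> x + b)"

definition err_prob :: "('a::euclidean_space \<times> int) measure \<Rightarrow> ('a \<Rightarrow> int) \<Rightarrow> real" where
  "err_prob M f = measure M {(x, y). f x \<noteq> y}"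

end

theory Submission
  imports Defs
begin

text \<open>Given the label, \<open>\<langle>\<theta>, X\<rangle>\<close> is a linear combination of independent centred normal
  coordinates, hence itself centred normal with standard deviation \<open>\<parallel>\<theta>\<parallel>\<sigma>\<close> for the class
  standard deviation \<open>\<sigma>\<close>. The two class-conditional error probabilities are therefore
  \<open>\<Phi>(-b/(\<parallel>\<theta>\<parallel>\<sigma>\<^sub>1))\<close> and \<open>\<Phi>(b/(\<parallel>\<theta>\<parallel>\<surd>\<beta>\<sigma>\<^sub>1))\<close>. As \<open>b > 0\<close>, the second is at least
  \<open>\<Phi>(0) = 1/2\<close>, and it carries the weight \<open>p\<^sub>- \<ge> 1/2\<close>.\<close>

abbreviation std_normal :: "real measure" where
  "std_normal \<equiv> density lborel std_normal_density"

lemma prob_space_std_normal: "prob_space std_normal"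
  by (rule prob_space_normal_density) simp

lemma Phi_nonneg: "0 \<le> Phi t"
  by (simp add: Phi_def)

lemma Phi_mono:
  assumes "t \<le> u"
  shows "Phi t \<le> Phi u"
proof -
  interpret prob_space std_normal by (rule prob_space_std_normal)
  show ?thesis
    unfolding Phi_def by (rule finite_measure_mono) (use assms in auto)
qed

lemma null_sets_density_lborel_singleton:
  assumes "f \<in> borel_measurable borel"
  shows "{c :: real} \<in> null_sets (density lborel f)"
proof -
  have "AE x in lborel. x \<in> {c} \<longrightarrow> f x = 0"
    using AE_lborel_singleton[of c] by eventually_elim simp
  moreover have "f \<in> borel_measurable lborel"
    using assms by simp
  ultimately show ?thesis
    using null_sets_density_iff[of f lborel "{c}"] by simp
qed

lemma emeasure_density_lborel_lessThan:
  assumes "f \<in> borel_measurable borel"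
  shows "emeasure (density lborel f) {..<c} = emeasure (density lborel f) {..c :: real}"
proof -
  have "emeasure (density lborel f) ({..<c} \<union> {c}) = emeasure (density lborel f) {..<c}"
    using assms by (intro emeasure_Un_null_set null_sets_density_lborel_singleton) simp_all
  moreover have "{..<c} \<union> {c} = {..c}"
    by auto
  ultimately show ?thesis
    by simp
qed

lemma distributed_std_normal_affine:
  assumes "\<alpha> \<noteq> 0"
  shows "distributed std_normal lborel (\<lambda>x. \<mu> + \<alpha> * x) (normal_density \<mu> \<bar>\<alpha>\<bar>)"
proof -
  interpret prob_space std_normal by (rule prob_space_std_normal)
  have "distributed std_normal lborel (\<lambda>x. x) std_normal_density"
    by (simp add: distributed_def distr_id2)
  from normal_density_affine[OF this _ assms, of \<mu>] show ?thesis by simp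
qed

lemma emeasure_normal_atMost:
  assumes "\<sigma> > 0"
  shows "emeasure (density lborel (normal_density \<mu> \<sigma>)) {..c} = ennreal (Phi ((c - \<mu>) / \<sigma>))"
proof -
  interpret prob_space std_normal by (rule prob_space_std_normal)
  have "emeasure (density lborel (normal_density \<mu> \<sigma>)) {..c}
      = emeasure std_normal ((\<lambda>x. \<mu> + \<sigma> * x) -` {..c} \<inter> space std_normal)"
    using distributed_emeasure[OF distributed_std_normal_affine[of \<sigma> \<mu>], of "{..c}"] assms
    by (simp add: emeasure_density)
  also have "(\<lambda>x. \<mu> + \<sigma> * x) -` {..c} \<inter> space std_normal = {..(c - \<mu>) / \<sigma>}"
    using assms by (auto simp: field_simps)
  finally show ?thesis
    by (simp add: Phi_def emeasure_eq_measure)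
qed

lemma emeasure_normal_lessThan:
  "\<sigma> > 0 \<Longrightarrow> emeasure (density lborel (normal_density \<mu> \<sigma>)) {..<c} = ennreal (Phi ((c - \<mu>) / \<sigma>))"
  by (simp add: emeasure_density_lborel_lessThan emeasure_normal_atMost)

lemma Phi_minus: "Phi (- t) = 1 - Phi t"
proof -
  interpret prob_space std_normal by (rule prob_space_std_normal)
  have "emeasure std_normal {t..} = emeasure std_normal (uminus -` {..- t} \<inter> space std_normal)"
    by (intro arg_cong[where f = "emeasure std_normal"]) auto
  also have "\<dots> = emeasure std_normal {..- t}"
    using distributed_emeasure[OF distributed_std_normal_affine[of "-1" 0], of "{..- t}"]
    by (simp add: emeasure_density)
  finally have "Phi (- t) = prob {t..}"
    by (simp add: Phi_def emeasure_eq_measure)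
  also have "{t..} = space std_normal - {..<t}"
    by auto
  also have "prob \<dots> = 1 - prob {..<t}"
    by (rule prob_compl) simp
  also have "prob {..<t} = Phi t"
    using emeasure_density_lborel_lessThan[of std_normal_density t]
    by (simp add: Phi_def emeasure_eq_measure)
  finally show ?thesis .
qed

lemma Phi_0: "Phi 0 = 1 / 2"
  using Phi_minus[of 0] by simp

lemma density_PiM_prod:
  assumes "finite I" and M: "sigma_finite_measure M"
    and g: "g \<in> borel_measurable M" "sigma_finite_measure (density M g)"
  shows "density (\<Pi>\<^sub>M i\<in>I. M) (\<lambda>x. \<Prod>i\<in>I. g (x i)) = (\<Pi>\<^sub>M i\<in>I. density M g)"
proof -
  interpret M: product_sigma_finite "\<lambda>_. M"
    by (simp add: product_sigma_finite_def M)
  interpret G: product_sigma_finite "\<lambda>_. density M g"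
    by (simp add: product_sigma_finite_def g)
  note [measurable] = g(1)
  show ?thesis
  proof (rule G.PiM_eqI[OF \<open>finite I\<close>])
    fix A assume A: "\<And>i. i \<in> I \<Longrightarrow> A i \<in> sets (density M g)"
    have "emeasure (density (\<Pi>\<^sub>M i\<in>I. M) (\<lambda>x. \<Prod>i\<in>I. g (x i))) (Pi\<^sub>E I A)
        = (\<integral>\<^sup>+ x. (\<Prod>i\<in>I. g (x i) * indicator (A i) (x i)) \<partial>(\<Pi>\<^sub>M i\<in>I. M))"
      using A \<open>finite I\<close>
      by (subst emeasure_density)
         (auto intro!: sets_PiM_I_finite nn_integral_cong
               simp: space_PiM indicator_def PiE_iff prod.distrib[symmetric] prod_zero_iff)
    also have "\<dots> = (\<Prod>i\<in>I. \<integral>\<^sup>+ x. g x * indicator (A i) x \<partial>M)"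
      using A by (intro M.product_nn_integral_prod \<open>finite I\<close>) (auto simp: g)
    also have "\<dots> = (\<Prod>i\<in>I. emeasure (density M g) (A i))"
      using A by (intro prod.cong) (auto simp: emeasure_density g)
    finally show "emeasure (density (\<Pi>\<^sub>M i\<in>I. M) (\<lambda>x. \<Prod>i\<in>I. g (x i))) (Pi\<^sub>E I A)
        = (\<Prod>i\<in>I. emeasure (density M g) (A i))" .
  qed (auto intro!: sets_PiM_cong)
qed

lemma indep_vars_PiM_components:
  assumes "finite I" and M: "\<And>i. i \<in> I \<Longrightarrow> prob_space (M i)"
  shows "prob_space.indep_vars (\<Pi>\<^sub>M i\<in>I. M i) M (\<lambda>i x. x i) I"
proof -
  interpret P: prob_space "\<Pi>\<^sub>M i\<in>I. M i"
    by (rule prob_space_PiM[OF M])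
  show ?thesis
  proof (cases "I = {}")
    case True
    then show ?thesis
      unfolding P.indep_vars_def P.indep_sets_def by simp
  next
    case False
    have "distr (\<Pi>\<^sub>M i\<in>I. M i) (\<Pi>\<^sub>M i\<in>I. M i) (\<lambda>x. restrict x I)
        = distr (\<Pi>\<^sub>M i\<in>I. M i) (\<Pi>\<^sub>M i\<in>I. M i) (\<lambda>x. x)"
      by (rule distr_cong) (auto simp: space_PiM)
    also have "\<dots> = (\<Pi>\<^sub>M i\<in>I. distr (\<Pi>\<^sub>M i\<in>I. M i) (M i) (\<lambda>x. x i))"
      by (simp add: distr_id2 distr_PiM_component M cong: PiM_cong)
    finally show ?thesis
      using False \<open>finite I\<close> by (subst P.indep_vars_iff_distr_eq_PiM') auto
  qed
qed

lemma distributed_PiM_component: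
  assumes "prob_space (density M f)" "f \<in> borel_measurable M" "i \<in> I"
  shows "distributed (\<Pi>\<^sub>M i\<in>I. density M f) M (\<lambda>x. x i) f"
proof -
  have "distr (\<Pi>\<^sub>M i\<in>I. density M f) M (\<lambda>x. x i)
      = distr (\<Pi>\<^sub>M i\<in>I. density M f) (density M f) (\<lambda>x. x i)"
    by (rule distr_cong) simp_all
  also have "\<dots> = density M f"
    using assms by (intro distr_PiM_component)
  finally show ?thesis
    using measurable_component_singleton[OF \<open>i \<in> I\<close>, of "\<lambda>_. density M f"] assms(2)
    by (simp add: distributed_def cong: measurable_cong_sets)
qed

lemma distributed_PiM_normal_lincomb:
  fixes a :: "'i \<Rightarrow> real"
  assumes "finite I" "s > 0" "j \<in> I" "a j \<noteq> 0"
  shows "distributed (\<Pi>\<^sub>M i\<in>I. density lborel (normal_density 0 s)) lborel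
           (\<lambda>x. \<Sum>i\<in>I. a i * x i) (normal_density 0 (s * sqrt (\<Sum>i\<in>I. (a i)\<^sup>2)))"
proof -
  let ?N = "density lborel (normal_density 0 s)"
  let ?P = "\<Pi>\<^sub>M i\<in>I. ?N"
  \<comment> \<open>\<open>sum_indep_normal\<close> needs positive standard deviations, so zero coefficients are dropped\<close>
  define J where "J = {i \<in> I. a i \<noteq> 0}"
  have J: "finite J" "J \<subseteq> I" "J \<noteq> {}"
    using assms by (auto simp: J_def)
  have N: "prob_space ?N"
    using \<open>s > 0\<close> by (rule prob_space_normal_density)
  interpret P: prob_space ?P
    using N by (rule prob_space_PiM)
  have "P.indep_vars (\<lambda>_. ?N) (\<lambda>i x. x i) J"
    by (rule P.indep_vars_subset[OF indep_vars_PiM_components[OF \<open>finite I\<close> N] J(2)])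
  then have indep: "P.indep_vars (\<lambda>_. borel) (\<lambda>i x. a i * x i) J"
    by (rule P.indep_vars_compose2) simp
  have "distributed ?P lborel (\<lambda>x. 0 + a i * x i) (normal_density (0 + a i * 0) (\<bar>a i\<bar> * s))"
    if "i \<in> J" for i
    using that \<open>s > 0\<close> J_def
    by (intro P.normal_density_affine distributed_PiM_component N) auto
  then have "distributed ?P lborel (\<lambda>x. \<Sum>i\<in>J. a i * x i)
      (normal_density (\<Sum>i\<in>J. 0) (sqrt (\<Sum>i\<in>J. (\<bar>a i\<bar> * s)\<^sup>2)))"
    using \<open>s > 0\<close> J_def by (intro P.sum_indep_normal J(1,3) indep) auto
  moreover have "(\<Sum>i\<in>J. a i * x i) = (\<Sum>i\<in>I. a i * x i)" for x
    by (rule sum.mono_neutral_left) (auto simp: J_def \<open>finite I\<close>)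
  moreover have "sqrt (\<Sum>i\<in>J. (\<bar>a i\<bar> * s)\<^sup>2) = s * sqrt (\<Sum>i\<in>I. (a i)\<^sup>2)"
  proof -
    have "(\<Sum>i\<in>J. (\<bar>a i\<bar> * s)\<^sup>2) = (\<Sum>i\<in>I. s\<^sup>2 * (a i)\<^sup>2)"
      by (rule sum.mono_neutral_cong_left) (auto simp: J_def \<open>finite I\<close> power_mult_distrib)
    then show ?thesis
      using \<open>s > 0\<close> by (simp add: real_sqrt_mult sum_distrib_left[symmetric])
  qed
  ultimately show ?thesis
    by simp
qed

lemma density_iso_gauss_eq_distr_PiM:
  assumes "s > 0"
  shows "density lborel (iso_gauss_density s)
       = distr (\<Pi>\<^sub>M b\<in>Basis. density lborel (normal_density 0 s)) borel
           (\<lambda>x. \<Sum>b\<in>Basis. x b *\<^sub>R b :: 'a::euclidean_space)"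
proof -
  have N: "sigma_finite_measure (density lborel (normal_density 0 s))"
    using assms by (intro prob_space_imp_sigma_finite prob_space_normal_density)
  have "density lborel (iso_gauss_density s)
      = distr (density (\<Pi>\<^sub>M b\<in>Basis. lborel) (\<lambda>x. iso_gauss_density s (\<Sum>b\<in>Basis. x b *\<^sub>R b :: 'a)))
          borel (\<lambda>x. \<Sum>b\<in>Basis. x b *\<^sub>R b)"
    unfolding iso_gauss_density_def by (subst lborel_eq) (rule density_distr, measurable)
  also have "(\<lambda>x. ennreal (iso_gauss_density s (\<Sum>b\<in>Basis. x b *\<^sub>R b :: 'a)))
      = (\<lambda>x. \<Prod>b\<in>Basis. ennreal (normal_density 0 s (x b)))"
    by (simp add: iso_gauss_density_def inner_sum_left inner_Basis if_distrib sum.If_cases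
        prod_ennreal cong: prod.cong)
  also have "density (\<Pi>\<^sub>M b\<in>Basis. lborel) \<dots> = (\<Pi>\<^sub>M b\<in>Basis. density lborel (normal_density 0 s))"
    using N by (intro density_PiM_prod) (auto simp: lborel.sigma_finite_measure_axioms)
  finally show ?thesis .
qed

lemma distributed_iso_gauss_inner:
  fixes \<theta> :: "'a::euclidean_space"
  assumes "s > 0" and "\<theta> \<noteq> 0"
  shows "distributed (density lborel (iso_gauss_density s)) lborel (\<lambda>x. \<theta> \<bullet> x)
           (normal_density 0 (norm \<theta> * s))"
proof -
  let ?P = "\<Pi>\<^sub>M b\<in>(Basis :: 'a set). density lborel (normal_density 0 s)"
  obtain j where j: "j \<in> Basis" "\<theta> \<bullet> j \<noteq> 0"
    using \<open>\<theta> \<noteq> 0\<close> euclidean_all_zero_iff by blast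
  have norm_\<theta>: "norm \<theta> = sqrt (\<Sum>b\<in>Basis. (\<theta> \<bullet> b)\<^sup>2)"
    by (simp add: norm_eq_sqrt_inner euclidean_inner[of \<theta> \<theta>] power2_eq_square)
  have "distr (density lborel (iso_gauss_density s)) lborel (\<lambda>x. \<theta> \<bullet> x)
      = distr ?P lborel (\<lambda>x. \<theta> \<bullet> (\<Sum>b\<in>Basis. x b *\<^sub>R b))"
    unfolding density_iso_gauss_eq_distr_PiM[OF \<open>s > 0\<close>]
    by (subst distr_distr) (auto simp: comp_def cong: measurable_cong_sets sets_PiM_cong)
  also have "\<dots> = distr ?P lborel (\<lambda>x. \<Sum>b\<in>Basis. (\<theta> \<bullet> b) * x b)"
    by (simp add: inner_sum_right mult.commute)
  also have "\<dots> = density lborel (normal_density 0 (norm \<theta> * s))"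
    using distributed_PiM_normal_lincomb[where a="\<lambda>b. \<theta> \<bullet> b", OF finite_Basis \<open>s > 0\<close> j] norm_\<theta>
    by (simp add: distributed_def mult.commute)
  finally show ?thesis
    by (simp add: distributed_def)
qed

lemma emeasure_iso_gauss_inner_vimage:
  fixes \<theta> :: "'a::euclidean_space"
  assumes "s > 0" and "\<theta> \<noteq> 0" and "A \<in> sets borel"
  shows "emeasure (density lborel (iso_gauss_density s)) {x. \<theta> \<bullet> x \<in> A}
       = emeasure (density lborel (normal_density 0 (norm \<theta> * s))) A"
  using distributed_emeasure[OF distributed_iso_gauss_inner[OF assms(1,2)], of A] assms(3)
  by (simp add: emeasure_density vimage_def Collect_conj_eq[symmetric])

lemma measurable_lin_clf[measurable]: "lin_clf \<theta> b \<in> measurable borel (count_space UNIV)"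
  unfolding lin_clf_def[abs_def] sgn_lab_def by measurable

lemma sets_misclassified:
  fixes f :: "'a::euclidean_space \<Rightarrow> 'b::countable"
  assumes [measurable]: "f \<in> measurable borel (count_space UNIV)"
  shows "{(x, y). f x \<noteq> y} \<in> sets (lborel \<Otimes>\<^sub>M count_space UNIV)"
proof -
  have "Measurable.pred (lborel \<Otimes>\<^sub>M count_space UNIV) (\<lambda>z. f (fst z) \<noteq> snd z)"
    by (rule measurable_compose_countable[where f="\<lambda>y z. f (fst z) \<noteq> y"]) measurable
  moreover have "{(x, y). f x \<noteq> y} = {z \<in> space (lborel \<Otimes>\<^sub>M count_space UNIV). f (fst z) \<noteq> snd z}"
    by (auto simp: space_pair_measure)
  ultimately show ?thesis
    by (simp only: pred_def)
qed

lemma emeasure_joint_law: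
  fixes A :: "('a::euclidean_space \<times> int) set"
  assumes "0 \<le> pp" "pp \<le> 1" and A[measurable]: "A \<in> sets (lborel \<Otimes>\<^sub>M count_space UNIV)"
  shows "emeasure (joint_law pp s \<beta>) A
       = ennreal pp * emeasure (density lborel (iso_gauss_density s)) {x. (x, 1) \<in> A}
       + ennreal (1 - pp) * emeasure (density lborel (iso_gauss_density (sqrt \<beta> * s))) {x. (x, -1) \<in> A}"
proof -
  interpret pair_sigma_finite "lborel :: 'a measure" "count_space (UNIV :: int set)"
    by (intro pair_sigma_finite.intro lborel.sigma_finite_measure_axioms sigma_finite_measure_count_space)
  have iso_nonneg: "0 \<le> iso_gauss_density r x" for r and x :: 'a
    by (simp add: iso_gauss_density_def prod_nonneg)
  have [measurable]: "iso_gauss_density r \<in> borel_measurable (borel :: 'a measure)" for r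
    unfolding iso_gauss_density_def[abs_def] by measurable
  define F where "F y = (\<integral>\<^sup>+ x. (if y = 1 then ennreal pp * ennreal (iso_gauss_density s x)
      else if y = -1 then ennreal (1 - pp) * ennreal (iso_gauss_density (sqrt \<beta> * s) x) else 0)
      * indicator A (x, y) \<partial>lborel)" for y :: int
  have "emeasure (joint_law pp s \<beta>) A = (\<integral>\<^sup>+ y. F y \<partial>count_space UNIV)"
    unfolding joint_law_def F_def
    by (subst emeasure_density, measurable, subst nn_integral_snd[symmetric])
      (auto intro!: nn_integral_cong simp: ennreal_mult assms iso_nonneg)
  also have "\<dots> = F 1 + F (-1)"
    by (subst nn_integral_count_space'[where A="{1, -1}"]) (auto simp: F_def)
  also have "\<dots> = ennreal pp * emeasure (density lborel (iso_gauss_density s)) {x. (x, 1) \<in> A}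
       + ennreal (1 - pp) * emeasure (density lborel (iso_gauss_density (sqrt \<beta> * s))) {x. (x, -1) \<in> A}"
    unfolding F_def
    by (simp add: emeasure_density nn_integral_cmult mult.assoc indicator_def of_bool_def
        del: ennreal_mult' cong: if_cong)
  finally show ?thesis .
qed

lemma err_prob_lin_clf:
  fixes \<theta> :: "'a::euclidean_space"
  assumes "\<sigma>1 > 0" "\<beta> > 0" "0 \<le> pp" "pp \<le> 1" "\<theta> \<noteq> 0"
  shows "err_prob (joint_law pp \<sigma>1 \<beta>) (lin_clf \<theta> b)
       = pp * Phi (- b / (norm \<theta> * \<sigma>1)) + (1 - pp) * Phi (b / (norm \<theta> * sqrt \<beta> * \<sigma>1))"
proof -
  let ?E = "{(x :: 'a, y). lin_clf \<theta> b x \<noteq> y}"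
  have section_pos: "{x. (x, 1) \<in> ?E} = {x. \<theta> \<bullet> x \<in> {..< - b}}"
    by (auto simp: lin_clf_def sgn_lab_def)
  have section_neg: "{x. (x, - 1) \<in> ?E} = {x. (- \<theta>) \<bullet> x \<in> {..b}}"
    by (auto simp: lin_clf_def sgn_lab_def)
  have prob_pos: "emeasure (density lborel (iso_gauss_density \<sigma>1)) {x. \<theta> \<bullet> x \<in> {..< - b}}
      = ennreal (Phi (- b / (norm \<theta> * \<sigma>1)))"
    using assms by (subst emeasure_iso_gauss_inner_vimage) (simp_all add: emeasure_normal_lessThan)
  have prob_neg: "emeasure (density lborel (iso_gauss_density (sqrt \<beta> * \<sigma>1))) {x. (- \<theta>) \<bullet> x \<in> {..b}}
      = ennreal (Phi (b / (norm \<theta> * sqrt \<beta> * \<sigma>1)))"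
    using assms
    by (subst emeasure_iso_gauss_inner_vimage) (simp_all add: emeasure_normal_atMost mult.assoc)
  have E: "?E \<in> sets (lborel \<Otimes>\<^sub>M count_space UNIV)"
    by (rule sets_misclassified) measurable
  have nonneg: "0 \<le> pp * Phi (- b / (norm \<theta> * \<sigma>1))"
    "0 \<le> (1 - pp) * Phi (b / (norm \<theta> * sqrt \<beta> * \<sigma>1))"
    using assms Phi_nonneg by simp_all
  have err: "emeasure (joint_law pp \<sigma>1 \<beta>) ?E
      = ennreal (pp * Phi (- b / (norm \<theta> * \<sigma>1)) + (1 - pp) * Phi (b / (norm \<theta> * sqrt \<beta> * \<sigma>1)))"
    unfolding emeasure_joint_law[OF assms(3,4) E] section_pos section_neg prob_pos prob_neg
    using assms Phi_nonneg by (simp add: ennreal_plus[OF nonneg] ennreal_mult)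
  show ?thesis
    unfolding err_prob_def measure_def err using nonneg by (intro enn2real_ennreal) simp
qed

theorem theorem2:
  fixes \<theta> :: "'a::euclidean_space" and \<sigma>1 \<beta> pp b :: real
  assumes "\<sigma>1 > 0" and "\<beta> > 3" and "0 < pp" and "pp < 1" and "1 - pp \<ge> 1/2"
    and "\<theta> \<noteq> 0" and "b > 0"
  shows "err_prob (joint_law pp \<sigma>1 \<beta>) (lin_clf \<theta> b)
           = pp * Phi (- b / (norm \<theta> * \<sigma>1)) + (1 - pp) * Phi (b / (norm \<theta> * sqrt \<beta> * \<sigma>1))
       \<and> err_prob (joint_law pp \<sigma>1 \<beta>) (lin_clf \<theta> b) \<ge> 1/4"
proof -
  have err: "err_prob (joint_law pp \<sigma>1 \<beta>) (lin_clf \<theta> b)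
      = pp * Phi (- b / (norm \<theta> * \<sigma>1)) + (1 - pp) * Phi (b / (norm \<theta> * sqrt \<beta> * \<sigma>1))"
    using assms by (intro err_prob_lin_clf) auto
  have "1 / 2 \<le> Phi (b / (norm \<theta> * sqrt \<beta> * \<sigma>1))"
    unfolding Phi_0[symmetric] using assms by (intro Phi_mono) simp
  then have "1 / 4 \<le> (1 - pp) * Phi (b / (norm \<theta> * sqrt \<beta> * \<sigma>1))"
    using mult_mono[of "1/2" "1 - pp" "1/2"] assms by simp
  moreover have "0 \<le> pp * Phi (- b / (norm \<theta> * \<sigma>1))"
    using assms Phi_nonneg by simp
  ultimately show ?thesis
    using err by simp
qed

end
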